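(* For an integer $n\geq 1$ and non-negative integers $j_1,\ldots,j_n$ with $j_1,j_n\geq 1$, \[\sum_{k=0}^n(-1)^k\,\zeta^{1/2}(2j_1+1,\ldots,2j_k+1)\,\zeta^{1/2}(2j_n+1,2j_{n-1}+1,\ldots,2j_{k+1}+1)=0,\] where $\zeta^{1/2}$ of the empty index is $1$.
   Context: For integers $k_1\geq 2$, $k_2,\ldots,k_n\geq 1$, $\zeta(k_1,\ldots,k_n)=\sum_{m_1>\cdots>m_n>0}m_1^{-k_1}\cdots m_n^{-k_n}$. Let $\mathbf{p}$ run over all indices of the form $(k_1\square k_2\square\cdots\square k_n)$ where each $\square$ is a comma or a plus sign, and $\sigma(\mathbf{p})$ the number of plus signs; define $\zeta^t(k_1,\ldots,k_n)=\sum_{\mathbf{p}}t^{\sigma(\mathbf{p})}\zeta(\mathbf{p})$ and $\zeta^{1/2}$ its value at $t=1/2$. *)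

theory Defs
  imports "HOL-Analysis.Analysis"
begin

text \<open>For the empty index the sum is over the singleton set containing the empty list, giving 1.\<close>

definition mzv_range :: "nat list \<Rightarrow> nat list set" where
  "mzv_range ks = {ms. length ms = length ks \<and> sorted_wrt (>) ms \<and> (\<forall>m\<in>set ms. 0 < m)}"

definition mzv :: "nat list \<Rightarrow> real" where
  "mzv ks = (\<Sum>\<^sub>\<infinity> ms \<in> mzv_range ks.
              prod_list (map2 (\<lambda>m k. 1 / (real m ^ k)) ms ks))"

text \<open>All indices obtained from (k_1 [] k_2 [] ... [] k_n) by choosing each box to be a comma
  or a plus sign, paired with the number of plus signs used.\<close>

fun merges :: "nat list \<Rightarrow> (nat list \<times> nat) list" where
  "merges [] = [([], 0)]"
| "merges [k] = [([k], 0)]"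
| "merges (k # l # rest) =
     map (\<lambda>(p, s). (k # p, s)) (merges (l # rest)) @
     map (\<lambda>(p, s). (case p of [] \<Rightarrow> ([k], s + 1) | h # q \<Rightarrow> ((k + h) # q, s + 1)))
         (merges (l # rest))"

definition zeta_t :: "real \<Rightarrow> nat list \<Rightarrow> real" where
  "zeta_t t ks = sum_list (map (\<lambda>(p, s). t ^ s * mzv p) (merges ks))"

definition zeta_half :: "nat list \<Rightarrow> real" where
  "zeta_half ks = zeta_t (1/2) ks"

end

theory Submission
  imports Defs
begin

text \<open>
  Truncate every multiple zeta value at a height N, i.e. let the summation
  variables range over {1..N} only.  For an index ks of length r and a real "kernel"
  X :: nat \<Rightarrow> nat \<Rightarrow> real put
    trunc_sum N X ks = \<Sum> (m_1,...,m_r) \<in> {1..N}^r. \<Prod>i m_i^(-k_i) * \<Prod>i X m_i m_(i+1).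
  With the kernel descent_kernel t (value 1 on strict descents, t on equalities, 0 otherwise)
  expanding the equalities shows that trunc_sum N (descent_kernel t) ks is exactly the
  truncation of zeta^t(ks) (lemma merges_trunc_sum).

  Finite identity: reversing an index transposes the kernel, and descent_kernel (1/2)
  satisfies X a b + X b a = 1.  For such complementary kernels the alternating sum of the
  theorem, with truncated sums in place of zeta^(1/2), telescopes to 0 termwise for every
  fixed tuple (m_1,...,m_n) (lemmas alternating_chain_sum and trunc_sum_alternating).

  Limit: for admissible indices (first entry at least 2, all entries at least 1) the
  truncations converge to mzv, because the summands are dominated by
  \<Prod>i m_i^(-(1 + 1/r)) (lemma weight_bound); hence they converge to zeta^t as N \<rightarrow> \<infinity>
  (lemma zeta_t_truncation_limit).  Passing to the limit in the finite identity gives the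
  theorem.
\<close>

definition grid :: "nat \<Rightarrow> nat \<Rightarrow> nat list set" where
  "grid N r = {ms. set ms \<subseteq> {1..N} \<and> length ms = r}"

definition weight :: "nat list \<Rightarrow> nat list \<Rightarrow> real" where
  "weight ks ms = prod_list (map2 (\<lambda>m k. 1 / real m ^ k) ms ks)"

fun chain :: "(nat \<Rightarrow> nat \<Rightarrow> real) \<Rightarrow> nat list \<Rightarrow> real" where
  "chain X (a # b # ms) = X a b * chain X (b # ms)"
| "chain X _ = 1"

definition trunc_sum :: "nat \<Rightarrow> (nat \<Rightarrow> nat \<Rightarrow> real) \<Rightarrow> nat list \<Rightarrow> real" where
  "trunc_sum N X ks = (\<Sum>ms\<in>grid N (length ks). weight ks ms * chain X ms)"

definition descent_kernel :: "real \<Rightarrow> nat \<Rightarrow> nat \<Rightarrow> real" where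
  "descent_kernel t a b = (if b < a then 1 else if a = b then t else 0)"

lemma finite_grid [simp]: "finite (grid N r)"
  unfolding grid_def by (rule finite_lists_length_eq) simp

lemma grid_0 [simp]: "grid N 0 = {[]}"
  unfolding grid_def by auto

lemma sum_grid_Suc:
  "(\<Sum>ms\<in>grid N (Suc r). f ms) = (\<Sum>m\<in>{1..N}. \<Sum>ms\<in>grid N r. f (m # ms))"
proof -
  have "grid N (Suc r) = (\<lambda>(ms, m). m # ms) ` (grid N r \<times> {1..N})"
    unfolding grid_def by (rule lists_length_Suc_eq)
  then have "(\<Sum>ms\<in>grid N (Suc r). f ms) = (\<Sum>(ms, m)\<in>grid N r \<times> {1..N}. f (m # ms))"
    by (simp add: sum.reindex inj_on_def case_prod_beta)
  then show ?thesis
    by (simp add: sum.cartesian_product[symmetric] sum.swap[of _ "grid N r"])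
qed

lemma weight_Cons [simp]: "weight (k # ks) (m # ms) = 1 / real m ^ k * weight ks ms"
  by (simp add: weight_def)

lemma weight_Nil [simp]: "weight [] ms = 1"
  by (simp add: weight_def)

lemma weight_nonneg: "0 \<le> weight ks ms"
  by (auto simp: weight_def intro!: prod_list_nonneg)

lemma weight_append:
  "length u = length a \<Longrightarrow> weight (a @ b) (u @ v) = weight a u * weight b v"
  by (simp add: weight_def)

lemma weight_rev:
  "length ms = length ks \<Longrightarrow> weight (rev ks) (rev ms) = weight ks ms"
  by (simp add: weight_def zip_rev flip: rev_map)

lemma chain_append:
  "chain X (xs @ y # ys) = chain X (xs @ [y]) * chain X (y # ys)"
  by (induction X xs rule: chain.induct) (auto simp: Cons_eq_append_conv)

lemma chain_rev: "chain X (rev ms) = chain (\<lambda>a b. X b a) ms"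
proof (induction "\<lambda>a b. X b a" ms rule: chain.induct)
  case (1 a b ms)
  then show ?case
    using chain_append[of X "rev ms" b "[a]"] by simp
qed simp_all

lemma trunc_sum_rev: "trunc_sum N X (rev ks) = trunc_sum N (\<lambda>a b. X b a) ks"
  unfolding trunc_sum_def length_rev
proof (rule sum.reindex_bij_witness[of _ rev rev])
  fix ms assume "ms \<in> grid N (length ks)"
  then show "weight ks (rev ms) * chain (\<lambda>a b. X b a) (rev ms) = weight (rev ks) ms * chain X ms"
    using weight_rev[of "rev ms" ks] chain_rev[of "\<lambda>a b. X b a" ms] by (simp add: grid_def)
qed (auto simp: grid_def)

lemma trunc_sum_split:
  assumes "k \<le> length as"
  shows "trunc_sum N X (take k as) * trunc_sum N Y (drop k as)
    = (\<Sum>ms\<in>grid N (length as). weight as ms * (chain X (take k ms) * chain Y (drop k ms)))"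
proof -
  let ?F = "\<lambda>ms. weight as ms * (chain X (take k ms) * chain Y (drop k ms))"
  have "trunc_sum N X (take k as) * trunc_sum N Y (drop k as)
      = (\<Sum>(u, v)\<in>grid N k \<times> grid N (length as - k).
          weight (take k as) u * chain X u * (weight (drop k as) v * chain Y v))"
    using assms by (simp add: trunc_sum_def sum_product sum.cartesian_product min_absorb2)
  also have "\<dots> = (\<Sum>(u, v)\<in>grid N k \<times> grid N (length as - k). ?F (u @ v))"
  proof (intro sum.cong refl, clarify)
    fix u v assume "u \<in> grid N k"
    then have "length u = k" by (simp add: grid_def)
    then show "weight (take k as) u * chain X u * (weight (drop k as) v * chain Y v) = ?F (u @ v)"
      using weight_append[of u "take k as" "drop k as" v] assms by simp
  qed
  also have "\<dots> = sum ?F (grid N (length as))"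
    by (rule sum.reindex_bij_witness[of _ "\<lambda>ms. (take k ms, drop k ms)" "\<lambda>(u, v). u @ v"])
      (use assms in \<open>auto simp: grid_def dest: in_set_takeD in_set_dropD\<close>)
  finally show ?thesis .
qed

text \<open>Writing S for this sum, S (a # b # ms) = - X a b * S (b # ms) and S [a] = 0.\<close>

lemma alternating_chain_sum:
  assumes "ms \<noteq> []"
  shows "(\<Sum>k=0..length ms. (-1) ^ k * (chain X (take k ms) * chain (\<lambda>a b. 1 - X a b) (drop k ms))) = 0"
  using assms
proof (induction ms rule: induct_list012)
  case (3 a b ms)
  let ?Y = "\<lambda>a b. 1 - X a b"
  let ?S = "\<lambda>ms. \<Sum>k=0..length ms. (-1) ^ k * (chain X (take k ms) * chain ?Y (drop k ms))"
  have "?S (a # b # ms) = (1 - X a b) * chain ?Y (b # ms)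
      - (\<Sum>k=0..length (b # ms). (-1) ^ k * (chain X (a # take k (b # ms)) * chain ?Y (drop k (b # ms))))"
    by (simp only: length_Cons sum.atLeast0_atMost_Suc_shift) (simp add: sum_negf)
  also have "\<dots> = - X a b * ?S (b # ms)"
  proof -
    have "(-1) ^ k * (chain X (a # take k (b # ms)) * chain ?Y (drop k (b # ms)))
        = X a b * ((-1) ^ k * (chain X (take k (b # ms)) * chain ?Y (drop k (b # ms))))
          + (if k = 0 then (1 - X a b) * chain ?Y (b # ms) else 0)" for k
      by (cases k) (simp_all add: algebra_simps)
    then show ?thesis
      by (simp add: sum.distrib sum_distrib_left right_diff_distrib sum_negf del: length_Cons)
  qed
  finally show ?case
    using "3.IH" by simp
qed simp_all

lemma trunc_sum_alternating:
  assumes "as \<noteq> []" and complementary: "\<And>a b. X a b + X b a = 1"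
  shows "(\<Sum>k=0..length as. (-1) ^ k * (trunc_sum N X (take k as) * trunc_sum N X (rev (drop k as)))) = 0"
proof -
  have transpose: "(\<lambda>a b. X b a) = (\<lambda>a b. 1 - X a b)"
    using complementary by (simp add: fun_eq_iff eq_diff_eq')
  have cancel: "(\<Sum>k=0..length as. (-1) ^ k * (chain X (take k ms) * chain (\<lambda>a b. 1 - X a b) (drop k ms))) = 0"
    if "ms \<in> grid N (length as)" for ms
  proof -
    have length: "length ms = length as"
      using that by (simp add: grid_def)
    with assms(1) have "ms \<noteq> []" by auto
    then show ?thesis
      using alternating_chain_sum[of ms X] length by simp
  qed
  have "(\<Sum>k=0..length as. (-1) ^ k * (trunc_sum N X (take k as) * trunc_sum N X (rev (drop k as))))
      = (\<Sum>ms\<in>grid N (length as). weight as ms * (\<Sum>k=0..length as.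
          (-1) ^ k * (chain X (take k ms) * chain (\<lambda>a b. 1 - X a b) (drop k ms))))"
    by (simp add: trunc_sum_rev transpose trunc_sum_split sum_distrib_left
        sum.swap[of _ "{0..length as}"] mult_ac)
  also have "\<dots> = 0"
    using cancel by simp
  finally show ?thesis .
qed

text \<open>The induction over merges runs with the first summation variable
  fixed, which is what head_sum records.\<close>

definition head_sum :: "nat \<Rightarrow> (nat \<Rightarrow> nat \<Rightarrow> real) \<Rightarrow> nat list \<Rightarrow> nat \<Rightarrow> real" where
  "head_sum N X ks m = (\<Sum>ms\<in>grid N (length ks - 1). weight ks (m # ms) * chain X (m # ms))"

lemma trunc_sum_head_sum:
  "ks \<noteq> [] \<Longrightarrow> trunc_sum N X ks = (\<Sum>m\<in>{1..N}. head_sum N X ks m)"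
  by (cases ks) (simp_all add: trunc_sum_def head_sum_def sum_grid_Suc)

lemma head_sum_single [simp]: "head_sum N X [k] m = 1 / real m ^ k"
  by (simp add: head_sum_def)

lemma head_sum_Cons:
  "head_sum N X (k # l # ks) m
     = 1 / real m ^ k * (\<Sum>m'\<in>{1..N}. X m m' * head_sum N X (l # ks) m')"
  by (simp add: head_sum_def sum_grid_Suc sum_distrib_left mult_ac)

text \<open>Merging the first two index entries corresponds to the equality m_1 = m_2.\<close>

lemma head_sum_merge:
  "head_sum N X ((k + h) # ks) m = 1 / real m ^ k * head_sum N X (h # ks) m"
  by (simp add: head_sum_def sum_distrib_left power_add mult_ac)

lemma merges_nonempty: "(p, s) \<in> set (merges ks) \<Longrightarrow> ks \<noteq> [] \<Longrightarrow> p \<noteq> []"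
  by (induction ks arbitrary: p s rule: merges.induct) (auto split: list.splits)

text \<open>The recursive clause of merges without the (unreachable) empty case.\<close>

lemma merges_Cons_Cons:
  "merges (k # l # rest)
     = map (\<lambda>(p, s). (k # p, s)) (merges (l # rest))
       @ map (\<lambda>(p, s). ((k + hd p) # tl p, s + 1)) (merges (l # rest))"
  by (auto intro!: map_cong dest: merges_nonempty split: list.split)

lemma merges_Cons_Cons_cases:
  assumes "(p, s) \<in> set (merges (k # l # rest))"
  obtains p' s' where "(p', s') \<in> set (merges (l # rest))" and "p = k # p'"
  | h q s' where "(h # q, s') \<in> set (merges (l # rest))" and "p = (k + h) # q"
proof -
  from assms consider (comma) p' where "(p', s) \<in> set (merges (l # rest))" and "p = k # p'"
    | (plus) p' s' where "(p', s') \<in> set (merges (l # rest))" and "p = (k + hd p') # tl p'"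
    unfolding merges_Cons_Cons by auto
  then show ?thesis
  proof cases
    case (plus p' s')
    then obtain h q where "p' = h # q"
      using merges_nonempty by (cases p') auto
    with plus that(2) show ?thesis by simp
  qed (use that(1) in blast)
qed

lemma sum_list_map_sum:
  "(\<Sum>x\<leftarrow>xs. \<Sum>y\<in>A. f x y) = (\<Sum>y\<in>A. \<Sum>x\<leftarrow>xs. f x y)"
  by (induction xs) (simp_all add: sum.distrib)

text \<open>The two halves of merges (k # l # rest): a comma after k adds a new summation
  variable below m, a plus sign merges k into the first entry.\<close>

lemma sum_head_sum_comma:
  assumes "\<And>p s. (p, s) \<in> set ps \<Longrightarrow> p \<noteq> []"
  shows "(\<Sum>(p, s)\<leftarrow>ps. t ^ s * head_sum N X (k # p) m)
    = 1 / real m ^ k * (\<Sum>m'\<in>{1..N}. X m m' * (\<Sum>(p, s)\<leftarrow>ps. t ^ s * head_sum N X p m'))"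
proof -
  define c where "c = 1 / real m ^ k"
  have "(\<Sum>(p, s)\<leftarrow>ps. t ^ s * head_sum N X (k # p) m)
      = (\<Sum>(p, s)\<leftarrow>ps. c * (\<Sum>m'\<in>{1..N}. X m m' * (t ^ s * head_sum N X p m')))"
    by (rule arg_cong[where f=sum_list], rule map_cong)
      (auto dest!: assms simp: neq_Nil_conv head_sum_Cons c_def sum_distrib_left mult_ac)
  also have "\<dots> = c * (\<Sum>m'\<in>{1..N}. X m m' * (\<Sum>(p, s)\<leftarrow>ps. t ^ s * head_sum N X p m'))"
    by (simp add: case_prod_unfold sum_list_const_mult sum_list_map_sum sum_distrib_left)
  finally show ?thesis
    unfolding c_def .
qed

lemma sum_head_sum_plus:
  assumes "\<And>p s. (p, s) \<in> set ps \<Longrightarrow> p \<noteq> []"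
  shows "(\<Sum>(p, s)\<leftarrow>ps. t * t ^ s * head_sum N X ((k + hd p) # tl p) m)
    = 1 / real m ^ k * t * (\<Sum>(p, s)\<leftarrow>ps. t ^ s * head_sum N X p m)"
proof -
  define c where "c = 1 / real m ^ k"
  have "(\<Sum>(p, s)\<leftarrow>ps. t * t ^ s * head_sum N X ((k + hd p) # tl p) m)
      = (\<Sum>(p, s)\<leftarrow>ps. c * t * (t ^ s * head_sum N X p m))"
    by (rule arg_cong[where f=sum_list], rule map_cong)
      (auto dest!: assms simp: neq_Nil_conv head_sum_merge c_def mult_ac)
  also have "\<dots> = c * t * (\<Sum>(p, s)\<leftarrow>ps. t ^ s * head_sum N X p m)"
    by (simp add: case_prod_unfold sum_list_const_mult)
  finally show ?thesis
    unfolding c_def .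
qed

text \<open>Fixed-head form of merges_trunc_sum, by induction along merges: the weight t on
  equal neighbours in descent_kernel t is exactly the weight t of a plus sign.\<close>

lemma merges_head_sum:
  assumes "ks \<noteq> []" and "m \<in> {1..N}"
  shows "(\<Sum>(p, s)\<leftarrow>merges ks. t ^ s * head_sum N (descent_kernel 0) p m)
    = head_sum N (descent_kernel t) ks m"
  using assms
proof (induction ks arbitrary: m rule: merges.induct)
  case (3 k l rest)
  define g where "g m' = (\<Sum>(p, s)\<leftarrow>merges (l # rest). t ^ s * head_sum N (descent_kernel 0) p m')"
    for m'
  define c where "c = 1 / real m ^ k"
  have nonempty: "p \<noteq> []" if "(p, s) \<in> set (merges (l # rest))" for p s
    using merges_nonempty that by simp
  have kernel: "(\<Sum>m'\<in>{1..N}. descent_kernel t m m' * g m')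
      = (\<Sum>m'\<in>{1..N}. descent_kernel 0 m m' * g m') + t * g m"
  proof -
    have "(\<Sum>m'\<in>{1..N}. descent_kernel t m m' * g m')
        = (\<Sum>m'\<in>{1..N}. descent_kernel 0 m m' * g m' + (if m' = m then t * g m else 0))"
      by (rule sum.cong) (auto simp: descent_kernel_def)
    then show ?thesis
      using "3.prems"(2) by (simp add: sum.distrib)
  qed
  have "(\<Sum>(p, s)\<leftarrow>merges (k # l # rest). t ^ s * head_sum N (descent_kernel 0) p m)
      = c * (\<Sum>m'\<in>{1..N}. descent_kernel 0 m m' * g m') + c * t * g m"
    unfolding merges_Cons_Cons
    by (simp add: comp_def sum_head_sum_comma[OF nonempty, unfolded case_prod_unfold]
        sum_head_sum_plus[OF nonempty, unfolded case_prod_unfold] case_prod_unfold g_def c_def)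
  also have "\<dots> = c * (\<Sum>m'\<in>{1..N}. descent_kernel t m m' * g m')"
    unfolding kernel by (simp add: algebra_simps)
  also have "\<dots> = head_sum N (descent_kernel t) (k # l # rest) m"
    using "3.IH" by (simp add: head_sum_Cons c_def g_def)
  finally show ?case .
qed simp_all

lemma merges_trunc_sum:
  "(\<Sum>(p, s)\<leftarrow>merges ks. t ^ s * trunc_sum N (descent_kernel 0) p) = trunc_sum N (descent_kernel t) ks"
proof (cases "ks = []")
  case True
  then show ?thesis by (simp add: trunc_sum_def)
next
  case False
  have "(\<Sum>(p, s)\<leftarrow>merges ks. t ^ s * trunc_sum N (descent_kernel 0) p)
      = (\<Sum>(p, s)\<leftarrow>merges ks. \<Sum>m\<in>{1..N}. t ^ s * head_sum N (descent_kernel 0) p m)"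
    by (rule arg_cong[where f=sum_list], rule map_cong)
      (auto simp: trunc_sum_head_sum merges_nonempty[OF _ False] sum_distrib_left)
  also have "\<dots> = (\<Sum>m\<in>{1..N}. head_sum N (descent_kernel t) ks m)"
    by (simp add: case_prod_unfold sum_list_map_sum merges_head_sum[OF False, unfolded case_prod_unfold])
  finally show ?thesis
    by (simp add: trunc_sum_head_sum[OF False])
qed

text \<open>Convergence.  An index is admissible if its entries are positive and its first entry
  is at least 2; this is the convergence condition of the series defining mzv.\<close>

definition admissible :: "nat list \<Rightarrow> bool" where
  "admissible ks \<longleftrightarrow> (\<forall>k\<in>set ks. 1 \<le> k) \<and> (ks \<noteq> [] \<longrightarrow> 2 \<le> hd ks)"

lemma merges_positive:
  "(p, s) \<in> set (merges ks) \<Longrightarrow> (\<forall>k\<in>set ks. 1 \<le> k) \<Longrightarrow> (\<forall>x\<in>set p. 1 \<le> x)"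
proof (induction ks arbitrary: p s rule: merges.induct)
  case (3 k l rest)
  from "3.prems"(1) show ?case
  proof (cases rule: merges_Cons_Cons_cases)
    case (1 p' s')
    have "\<forall>x\<in>set p'. 1 \<le> x"
      using "3.prems"(2) by (intro "3.IH"(1)[OF 1(1)]) simp
    with 1(2) "3.prems"(2) show ?thesis by simp
  next
    case (2 h q s')
    have "\<forall>x\<in>set (h # q). 1 \<le> x"
      using "3.prems"(2) by (intro "3.IH"(1)[OF 2(1)]) simp
    with 2(2) "3.prems"(2) show ?thesis by simp
  qed
qed auto

text \<open>Merging never decreases the first entry, so every index in merges ks is admissible.\<close>

lemma merges_admissible: "(p, s) \<in> set (merges ks) \<Longrightarrow> admissible ks \<Longrightarrow> admissible p"
proof (cases ks rule: merges.cases)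
  case (3 k l rest)
  assume mem: "(p, s) \<in> set (merges ks)" and "admissible ks"
  then have "2 \<le> k"
    by (simp add: admissible_def 3)
  moreover have "p \<noteq> [] \<and> k \<le> hd p"
    using mem unfolding 3 by (cases rule: merges_Cons_Cons_cases) auto
  ultimately show "admissible p"
    using merges_positive[OF mem] \<open>admissible ks\<close> by (auto simp: admissible_def)
qed (auto simp: admissible_def)

lemma admissible_take: "admissible ks \<Longrightarrow> admissible (take k ks)"
  unfolding admissible_def by (auto dest: in_set_takeD)

lemma tail_weight_bound:
  fixes M e :: real
  assumes "list_all2 (\<lambda>m k. 1 \<le> m \<and> real m \<le> M \<and> 1 \<le> k) ms ks" and "0 \<le> e" and "0 < M"
  shows "weight ks ms \<le> M powr (e * length ms) * prod_list (map (\<lambda>m. real m powr - (1 + e)) ms)"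
  using assms(1)
proof (induction rule: list_all2_induct)
  case Nil
  show ?case using assms(3) by simp
next
  case (Cons m ms k ks)
  have m: "1 \<le> real m" "real m \<le> M" and k: "1 \<le> k"
    using Cons.hyps by auto
  have "real m \<le> real m ^ k"
    using power_increasing[of 1 k "real m"] m k by simp
  then have "1 / real m ^ k \<le> 1 / real m"
    using m by (intro divide_left_mono) auto
  also have "\<dots> = real m powr - (1 + e) * real m powr e"
    using m by (simp add: powr_add[symmetric] powr_minus_divide)
  also have "\<dots> \<le> real m powr - (1 + e) * M powr e"
    using m assms(2) by (intro mult_left_mono powr_mono2) auto
  finally have head: "1 / real m ^ k \<le> M powr e * real m powr - (1 + e)"
    by (simp add: mult_ac)
  have "weight (k # ks) (m # ms) \<le> (M powr e * real m powr - (1 + e))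
      * (M powr (e * length ms) * prod_list (map (\<lambda>m. real m powr - (1 + e)) ms))"
    unfolding weight_Cons
    by (rule mult_mono[OF head Cons.IH]) (auto simp: weight_nonneg)
  also have "\<dots> = M powr (e * length (m # ms)) * prod_list (map (\<lambda>m. real m powr - (1 + e)) (m # ms))"
    by (simp add: powr_add[symmetric] algebra_simps)
  finally show ?case .
qed

lemma inverse_square_powr:
  fixes x e :: real
  assumes "0 < x" and "e * (n + 1) = 1"
  shows "1 / x ^ 2 * x powr (e * n) = x powr - (1 + e)"
proof -
  have "- (1 + e) = - 2 + e * n"
    using assms(2) by (simp add: algebra_simps)
  then have "x powr - (1 + e) = x powr - 2 * x powr (e * n)"
    by (simp only: powr_add)
  also have "x powr - 2 = 1 / x ^ 2"
    using assms(1) by (simp add: powr_minus_divide powr_numeral)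
  finally show ?thesis by simp
qed

text \<open>Domination of the MZV summand: on a strictly decreasing tuple of length r with
  admissible exponents, m_1^(-k_1) ... m_r^(-k_r) \<le> \<Prod>i m_i^(-(1 + 1/r)), since
  m_i \<le> m_1 and k_1 \<ge> 2.\<close>

lemma weight_bound:
  assumes "admissible ks" and "ms \<in> mzv_range ks"
  shows "weight ks ms \<le> prod_list (map (\<lambda>m. real m powr - (1 + 1 / length ks)) ms)"
proof (cases ms)
  case Nil
  then show ?thesis by (simp add: weight_def)
next
  case (Cons m rest)
  from assms(2) Cons obtain k ks' where ks: "ks = k # ks'" and length: "length rest = length ks'"
    by (cases ks) (auto simp: mzv_range_def)
  define e where "e = 1 / real (length ks)"
  have m: "1 \<le> real m" and k: "2 \<le> k"
    using assms Cons ks by (auto simp: mzv_range_def admissible_def)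
  have "list_all2 (\<lambda>x k. 1 \<le> x \<and> real x \<le> real m \<and> 1 \<le> k) rest ks'"
    using assms Cons ks length
    by (auto simp: list_all2_iff mzv_range_def admissible_def elim!: in_set_zipE)
  then have tail: "weight ks' rest
      \<le> real m powr (e * length rest) * prod_list (map (\<lambda>x. real x powr - (1 + e)) rest)"
    using m by (intro tail_weight_bound) (auto simp: e_def)
  have "real m ^ 2 \<le> real m ^ k"
    using m k by (intro power_increasing) auto
  then have head: "1 / real m ^ k \<le> 1 / real m ^ 2"
    using m by (intro divide_left_mono) auto
  have "weight ks ms \<le> 1 / real m ^ 2
      * (real m powr (e * length rest) * prod_list (map (\<lambda>x. real x powr - (1 + e)) rest))"
    unfolding Cons ks weight_Cons by (rule mult_mono[OF head tail]) (auto simp: weight_nonneg)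
  also have "\<dots> = (1 / real m ^ 2 * real m powr (e * length rest))
      * prod_list (map (\<lambda>x. real x powr - (1 + e)) rest)"
    by (rule mult.assoc[symmetric])
  also have "1 / real m ^ 2 * real m powr (e * length rest) = real m powr - (1 + e)"
    using m length by (intro inverse_square_powr) (auto simp: e_def ks)
  finally show ?thesis
    unfolding e_def Cons by simp
qed

lemma sum_grid_prod_list:
  fixes g :: "nat \<Rightarrow> 'a::comm_semiring_1"
  shows "(\<Sum>ms\<in>grid N r. prod_list (map g ms)) = (\<Sum>m\<in>{1..N}. g m) ^ r"
proof (induction r)
  case (Suc r)
  have "(\<Sum>ms\<in>grid N (Suc r). prod_list (map g ms))
      = (\<Sum>m\<in>{1..N}. g m * (\<Sum>ms\<in>grid N r. prod_list (map g ms)))"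
    by (simp add: sum_grid_Suc sum_distrib_left)
  then show ?case
    by (simp add: Suc.IH sum_distrib_right)
qed simp

lemma chain_descent_kernel_0: "chain (descent_kernel 0) ms = (if sorted_wrt (>) ms then 1 else 0)"
  by (induction "descent_kernel 0" ms rule: chain.induct) (auto simp: descent_kernel_def)

lemma trunc_sum_descent_kernel_0:
  "trunc_sum N (descent_kernel 0) ks = sum (weight ks) (mzv_range ks \<inter> grid N (length ks))"
proof -
  have "mzv_range ks \<inter> grid N (length ks) = {ms \<in> grid N (length ks). sorted_wrt (>) ms}"
    by (auto simp: mzv_range_def grid_def)
  then show ?thesis
    by (simp add: trunc_sum_def chain_descent_kernel_0 sum.inter_filter if_distrib cong: if_cong)
qed

lemma trunc_sum_descent_kernel_0_bound:
  assumes "admissible ks"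
  shows "trunc_sum N (descent_kernel 0) ks \<le> (\<Sum>m\<in>{1..N}. real m powr - (1 + 1 / length ks)) ^ length ks"
proof -
  have "trunc_sum N (descent_kernel 0) ks
      \<le> (\<Sum>ms\<in>mzv_range ks \<inter> grid N (length ks).
          prod_list (map (\<lambda>m. real m powr - (1 + 1 / length ks)) ms))"
    unfolding trunc_sum_descent_kernel_0 using assms by (intro sum_mono weight_bound) auto
  also have "\<dots> \<le> (\<Sum>ms\<in>grid N (length ks). prod_list (map (\<lambda>m. real m powr - (1 + 1 / length ks)) ms))"
    by (intro sum_mono2) (auto intro!: prod_list_nonneg)
  finally show ?thesis
    by (simp only: sum_grid_prod_list)
qed

lemma eventually_subset_grid:
  assumes "finite F" and "F \<subseteq> mzv_range ks"
  shows "eventually (\<lambda>N. F \<subseteq> grid N (length ks)) sequentially"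
proof (rule eventually_sequentiallyI)
  fix N assume "Max (insert 0 (\<Union>ms\<in>F. set ms)) \<le> N"
  then have "m \<le> N" if "ms \<in> F" and "m \<in> set ms" for ms m
    using that assms(1) by (meson Max_ge UN_I finite_UN_I finite_set finite_insert insertCI le_trans)
  then show "F \<subseteq> grid N (length ks)"
    using assms(2) by (fastforce simp: mzv_range_def grid_def)
qed

lemma mzv_summable:
  assumes "admissible ks"
  shows "weight ks summable_on mzv_range ks"
proof (rule nonneg_bdd_above_summable_on)
  let ?C = "(\<Sum>m. real m powr - (1 + 1 / length ks)) ^ length ks"
  show "bdd_above (sum (weight ks) ` {F. F \<subseteq> mzv_range ks \<and> finite F})"
  proof (cases "ks = []")
    case True
    then have "mzv_range ks = {[]}"
      by (auto simp: mzv_range_def)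
    then show ?thesis by auto
  next
    case False
    have summable: "summable (\<lambda>m. real m powr - (1 + 1 / length ks))"
      using False by (simp add: summable_real_powr_iff)
    have "sum (weight ks) F \<le> ?C" if F: "F \<subseteq> mzv_range ks" "finite F" for F
    proof -
      obtain N where "F \<subseteq> grid N (length ks)"
        using eventually_subset_grid[OF F(2,1)] unfolding eventually_sequentially by blast
      then have "sum (weight ks) F \<le> sum (weight ks) (mzv_range ks \<inter> grid N (length ks))"
        using F by (intro sum_mono2) (auto simp: weight_nonneg)
      also have "\<dots> \<le> (\<Sum>m\<in>{1..N}. real m powr - (1 + 1 / length ks)) ^ length ks"
        using trunc_sum_descent_kernel_0_bound[OF assms] by (simp add: trunc_sum_descent_kernel_0)
      also have "\<dots> \<le> ?C"
        using summable by (intro power_mono sum_le_suminf sum_nonneg) auto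
      finally show ?thesis .
    qed
    then show ?thesis
      by (intro bdd_aboveI[where M = ?C]) auto
  qed
qed (simp add: weight_nonneg)

lemma mzv_truncation_limit:
  assumes "admissible ks"
  shows "(\<lambda>N. trunc_sum N (descent_kernel 0) ks) \<longlonglongrightarrow> mzv ks"
proof -
  have "(weight ks has_sum mzv ks) (mzv_range ks)"
    using mzv_summable[OF assms] by (simp add: mzv_def weight_def[symmetric])
  moreover have "filterlim (\<lambda>N. mzv_range ks \<inter> grid N (length ks))
      (finite_subsets_at_top (mzv_range ks)) sequentially"
    unfolding filterlim_finite_subsets_at_top
    by (auto intro: finite_subset[OF _ finite_grid] elim!: eventually_mono[OF eventually_subset_grid])
  ultimately show ?thesis
    unfolding trunc_sum_descent_kernel_0 has_sum_def by (rule filterlim_compose)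
qed

lemma tendsto_sum_list:
  fixes f :: "'b \<Rightarrow> 'a \<Rightarrow> 'c::real_normed_vector"
  shows "(\<And>x. x \<in> set xs \<Longrightarrow> ((\<lambda>N. f N x) \<longlongrightarrow> g x) F) \<Longrightarrow>
    ((\<lambda>N. \<Sum>x\<leftarrow>xs. f N x) \<longlongrightarrow> (\<Sum>x\<leftarrow>xs. g x)) F"
  by (induction xs) (auto intro!: tendsto_add)

lemma zeta_t_truncation_limit:
  assumes "admissible ks"
  shows "(\<lambda>N. trunc_sum N (descent_kernel t) ks) \<longlonglongrightarrow> zeta_t t ks"
proof -
  have "admissible (fst x)" if "x \<in> set (merges ks)" for x
    using merges_admissible[of "fst x" "snd x" ks] that assms by simp
  then have "(\<lambda>N. \<Sum>(p, s)\<leftarrow>merges ks. t ^ s * trunc_sum N (descent_kernel 0) p)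
      \<longlonglongrightarrow> (\<Sum>(p, s)\<leftarrow>merges ks. t ^ s * mzv p)"
    unfolding case_prod_unfold by (intro tendsto_sum_list tendsto_mult_left mzv_truncation_limit)
  then show ?thesis
    by (simp add: merges_trunc_sum zeta_t_def)
qed

lemma zeta_half_alternating:
  assumes "as \<noteq> []" and "admissible as" and "admissible (rev as)"
  shows "(\<Sum>k=0..length as. (-1) ^ k * (zeta_half (take k as) * zeta_half (rev (drop k as)))) = 0"
proof -
  let ?K = "descent_kernel (1 / 2)"
  have complementary: "?K a b + ?K b a = 1" for a b
    by (auto simp: descent_kernel_def)
  have "admissible (rev (drop k as))" for k
    using admissible_take[OF assms(3)] by (simp add: rev_drop)
  then have "(\<lambda>N. \<Sum>k=0..length as. (-1) ^ k * (trunc_sum N ?K (take k as) * trunc_sum N ?K (rev (drop k as))))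
      \<longlonglongrightarrow> (\<Sum>k=0..length as. (-1) ^ k * (zeta_half (take k as) * zeta_half (rev (drop k as))))"
    unfolding zeta_half_def
    by (intro tendsto_sum tendsto_mult tendsto_const zeta_t_truncation_limit admissible_take assms(2))
  then have "(\<lambda>N. 0) \<longlonglongrightarrow> (\<Sum>k=0..length as. (-1) ^ k * (zeta_half (take k as) * zeta_half (rev (drop k as))))"
    by (simp only: trunc_sum_alternating[OF assms(1) complementary])
  then show ?thesis
    unfolding LIMSEQ_const_iff by (rule sym)
qed

theorem mainTheorem9:
  fixes n :: nat and j :: "nat \<Rightarrow> nat"
  assumes "n \<ge> 1" and "j 1 \<ge> 1" and "j n \<ge> 1"
  shows "(\<Sum>k = 0..n. (-1) ^ k
            * zeta_half (map (\<lambda>i. 2 * j i + 1) [1..<k + 1])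
            * zeta_half (map (\<lambda>i. 2 * j i + 1) (rev [k + 1..<n + 1]))) = 0"
proof -
  define as where "as = map (\<lambda>i. 2 * j i + 1) [1..<n + 1]"
  have length: "length as = n" and nonempty: "as \<noteq> []"
    using assms(1) by (auto simp: as_def)
  have "hd as = 2 * j 1 + 1" and "hd (rev as) = 2 * j n + 1"
    using assms(1) by (simp_all add: as_def hd_map hd_rev last_map hd_upt last_upt del: upt_Suc)
  then have admissible: "admissible as" "admissible (rev as)"
    using assms(2,3) by (auto simp: admissible_def as_def)
  have prefix: "map (\<lambda>i. 2 * j i + 1) [1..<k + 1] = take k as" if "k \<le> n" for k
    using that by (simp add: as_def take_map take_upt add.commute[of 1] del: upt_Suc)
  have suffix: "map (\<lambda>i. 2 * j i + 1) (rev [k + 1..<n + 1]) = rev (drop k as)" for k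
    by (simp add: as_def drop_map rev_map)
  have "(\<Sum>k = 0..n. (-1) ^ k
            * zeta_half (map (\<lambda>i. 2 * j i + 1) [1..<k + 1])
            * zeta_half (map (\<lambda>i. 2 * j i + 1) (rev [k + 1..<n + 1])))
      = (\<Sum>k=0..length as. (-1) ^ k * (zeta_half (take k as) * zeta_half (rev (drop k as))))"
    unfolding length by (intro sum.cong refl) (simp only: prefix suffix mult.assoc atLeastAtMost_iff)
  also have "\<dots> = 0"
    using zeta_half_alternating[OF nonempty admissible] .
  finally show ?thesis .
qed

end
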